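(* Let $k\subset K$ be a finite totally ramified extension of complete discrete valuation fields of degree $n$. On $\mathbb Z^2$ define $(a,b)\le(a',b')$ iff $a\le a'$ and $b\le b'$, and $(a,b)\sim(a',b')$ iff $a-a'=b'-b=nc$ for some $c\in\mathbb Z$. Then: 1. $\le$ is a partial order and $\sim$ is an equivalence relation on $\mathbb Z^2$. 2. On $\mathcal X=\mathbb Z^2/\sim$ (with $[(a,b)]$ the class of $(a,b)$), setting $[(a,b)]\le^{\mathcal X}[(a',b')]$ iff $(a,b)\le(a'',b'')$ for some $(a'',b'')\sim(a',b')$ gives a well-defined partial order. 3. For all $a,b,a',b'\in\mathbb Z$: $\mathfrak m^a\otimes\mathfrak m^b\supseteq\mathfrak m^{a'}\otimes\mathfrak m^{b'}$ if and only if $[(a,b)]\le^{\mathcal X}[(a',b')]$.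
   Context: $\mathfrak m$ is the maximal ideal of the ring of integers $O_K$ of $K$, $O_k$ the ring of integers of $k$. For $O_k$-submodules $A,B\subset K$, $A\otimes B$ denotes the $O_k$-submodule of $K\otimes_kK$ generated by all $x\otimes y$ with $x\in A$, $y\in B$. *)

theory Defs
  imports Main
begin

text \<open>A normalized discrete valuation on a field of type 'K is given by its
restriction v to the nonzero elements (the value of v at 0 is irrelevant).\<close>

definition discrete_valuation :: "('K::field \<Rightarrow> int) \<Rightarrow> bool" where
  "discrete_valuation v \<longleftrightarrow>
     (\<forall>x y. x \<noteq> 0 \<longrightarrow> y \<noteq> 0 \<longrightarrow> v (x * y) = v x + v y) \<and>
     (\<forall>x y. x \<noteq> 0 \<longrightarrow> y \<noteq> 0 \<longrightarrow> x + y \<noteq> 0 \<longrightarrow> v (x + y) \<ge> min (v x) (v y)) \<and>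
     (\<forall>z. \<exists>x. x \<noteq> 0 \<and> v x = z)"

definition vcauchy :: "('K::field \<Rightarrow> int) \<Rightarrow> 'K set \<Rightarrow> (nat \<Rightarrow> 'K) \<Rightarrow> bool" where
  "vcauchy v S s \<longleftrightarrow> (\<forall>i. s i \<in> S) \<and>
     (\<forall>N::int. \<exists>M. \<forall>i\<ge>M. \<forall>j\<ge>M. s i = s j \<or> v (s i - s j) \<ge> N)"

definition vconverges :: "('K::field \<Rightarrow> int) \<Rightarrow> (nat \<Rightarrow> 'K) \<Rightarrow> 'K \<Rightarrow> bool" where
  "vconverges v s L \<longleftrightarrow> (\<forall>N::int. \<exists>M. \<forall>i\<ge>M. s i = L \<or> v (s i - L) \<ge> N)"

definition vcomplete_on :: "('K::field \<Rightarrow> int) \<Rightarrow> 'K set \<Rightarrow> bool" where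
  "vcomplete_on v S \<longleftrightarrow> (\<forall>s. vcauchy v S s \<longrightarrow> (\<exists>L\<in>S. vconverges v s L))"

definition subfield :: "'K::field set \<Rightarrow> bool" where
  "subfield k \<longleftrightarrow> 0 \<in> k \<and> 1 \<in> k \<and> (\<forall>x\<in>k. \<forall>y\<in>k. x + y \<in> k \<and> x * y \<in> k) \<and>
     (\<forall>x\<in>k. - x \<in> k \<and> inverse x \<in> k)"

definition ext_degree :: "'K::field set \<Rightarrow> nat \<Rightarrow> bool" where
  "ext_degree k n \<longleftrightarrow> (\<exists>bs::'K list. length bs = n \<and>
     (\<forall>x. \<exists>!cs. length cs = n \<and> set cs \<subseteq> k \<and> x = (\<Sum>i<n. cs ! i * bs ! i)))"

text \<open>Powers of the maximal ideal of O_K (fractional ideals for a < 0), and O_k.\<close>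
definition mpow :: "('K::field \<Rightarrow> int) \<Rightarrow> int \<Rightarrow> 'K set" where
  "mpow v a = {x. x = 0 \<or> v x \<ge> a}"

definition ring_of_integers :: "('K::field \<Rightarrow> int) \<Rightarrow> 'K set \<Rightarrow> 'K set" where
  "ring_of_integers v k = {x \<in> k. x = 0 \<or> v x \<ge> 0}"

text \<open>Elements of the free k-vector space on K \<times> K are represented by finitely
supported functions; K \<otimes>_k K is its quotient by the k-span of the bilinearity
relations. An O_k-submodule of K \<otimes>_k K is represented by its full preimage in the
free space, so inclusion of submodules is inclusion of preimages.\<close>

definition delta :: "'K \<times> 'K \<Rightarrow> 'K \<times> 'K \<Rightarrow> 'K::field" where
  "delta p = (\<lambda>q. if q = p then 1 else 0)"

definition lin_comb :: "('K \<times> 'K \<Rightarrow> 'K::field) set \<Rightarrow> 'K set \<Rightarrow> ('K \<times> 'K \<Rightarrow> 'K) set" where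
  "lin_comb S C = {(\<lambda>q. \<Sum>g\<in>G. c g * g q) | G c. finite G \<and> G \<subseteq> S \<and> (\<forall>g\<in>G. c g \<in> C)}"

definition bilin_rels :: "'K::field set \<Rightarrow> ('K \<times> 'K \<Rightarrow> 'K) set" where
  "bilin_rels k =
     {(\<lambda>q. delta (x + x', y) q - delta (x, y) q - delta (x', y) q) | x x' y. True} \<union>
     {(\<lambda>q. delta (x, y + y') q - delta (x, y) q - delta (x, y') q) | x y y'. True} \<union>
     {(\<lambda>q. delta (c * x, y) q - c * delta (x, y) q) | c x y. c \<in> k} \<union>
     {(\<lambda>q. delta (x, c * y) q - c * delta (x, y) q) | c x y. c \<in> k}"

text \<open>Preimage in the free space of the O_k-submodule A \<otimes> B of K \<otimes>_k K generated by
all x \<otimes> y with x \<in> A, y \<in> B.\<close>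
definition tensor_sub :: "('K::field \<Rightarrow> int) \<Rightarrow> 'K set \<Rightarrow> 'K set \<Rightarrow> 'K set \<Rightarrow> ('K \<times> 'K \<Rightarrow> 'K) set" where
  "tensor_sub v k A B =
     {(\<lambda>q. f q + r q) | f r.
        f \<in> lin_comb {delta (x, y) | x y. x \<in> A \<and> y \<in> B} (ring_of_integers v k) \<and>
        r \<in> lin_comb (bilin_rels k) k}"

definition le2 :: "(int \<times> int) rel" where
  "le2 = {(p, q). fst p \<le> fst q \<and> snd p \<le> snd q}"

definition sim :: "nat \<Rightarrow> (int \<times> int) rel" where
  "sim n = {(p, q). \<exists>c::int. fst p - fst q = int n * c \<and> snd q - snd p = int n * c}"

definition leX_rep :: "nat \<Rightarrow> int \<times> int \<Rightarrow> int \<times> int \<Rightarrow> bool" where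
  "leX_rep n p q \<longleftrightarrow> (\<exists>q''. (q'', q) \<in> sim n \<and> (p, q'') \<in> le2)"

definition leX :: "nat \<Rightarrow> ((int \<times> int) set) rel" where
  "leX n = {(X, Y). X \<in> UNIV // sim n \<and> Y \<in> UNIV // sim n \<and> (\<exists>p\<in>X. \<exists>q\<in>Y. leX_rep n p q)}"

end

theory Submission
  imports Defs "HOL-Algebra.Algebraic_Closure_Type"
begin

(*
  A k-bilinear form B : K \<times> K \<rightarrow> k mapping m^a \<times> m^b into O_k maps all of m^a \<otimes> m^b
  into O_k, so such forms detect non-inclusions. Since v(k^x) = nZ and v(pi) = 1 for a
  uniformizer pi, the terms of a nonzero k-combination of 1, pi, ..., pi^(n-1) have
  valuations that are pairwise distinct mod n; hence these powers form a k-basis of K, and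
  v(x) is the minimum of v(c_i) + i over the nonzero coordinates c_i of x.
  If a \<le> a' + nd and b \<le> b' - nd, pick t \<in> k with v(t) = nd: every generator x \<otimes> y of
  m^a' \<otimes> m^b' equals tx \<otimes> t^-1 y, a generator of m^a \<otimes> m^b. Otherwise, the product of
  the coordinate functionals belonging to the residues of a' and b' mod n, scaled by a
  suitable element of k, is O_k-valued on m^a \<times> m^b but not on a generator of m^a' \<otimes> m^b'.
*)

section \<open>Dimension of K over k\<close>

abbreviation RK :: "'K::field ring" where
  "RK \<equiv> ring_of_type_algebra"

lemma RK_simps [simp]:
  "carrier RK = UNIV" "x \<otimes>\<^bsub>RK\<^esub> y = x * y" "x \<oplus>\<^bsub>RK\<^esub> y = x + y"
  "\<zero>\<^bsub>RK\<^esub> = 0" "\<one>\<^bsub>RK\<^esub> = 1"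
  by (simp_all add: ring_of_type_algebra_def)

lemma ring_RK: "ring (RK :: 'K::field ring)"
  by rule

lemma RK_minus [simp]: "\<ominus>\<^bsub>RK\<^esub> x = - (x::'K::field)"
  using abelian_group.r_neg[OF ring.is_abelian_group[OF ring_RK], of x] add.inverse_unique
  by (metis RK_simps(1,3,4) UNIV_I)

lemma RK_inv [simp]: "(x::'K::field) \<noteq> 0 \<Longrightarrow> inv\<^bsub>RK\<^esub> x = inverse x"
proof -
  assume x: "x \<noteq> 0"
  interpret field "RK::'K ring" by rule
  have "x \<otimes>\<^bsub>RK\<^esub> inv\<^bsub>RK\<^esub> x = \<one>\<^bsub>RK\<^esub>"
    using x by (intro Units_r_inv) (simp add: field_Units)
  then show ?thesis using inverse_unique by (metis RK_simps(2,5))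
qed

lemma subfield_RK:
  assumes "Defs.subfield k"
  shows "Subrings.subfield k (RK :: 'K::field ring)"
proof (rule field.subfieldI')
  show "field (RK :: 'K ring)" by rule
  show "subring k RK"
    using assms unfolding Defs.subfield_def by (intro ring.subringI[OF ring_RK]) auto
  show "\<And>x. x \<in> k - {\<zero>\<^bsub>RK\<^esub>} \<Longrightarrow> inv\<^bsub>RK\<^esub> x \<in> k"
    using assms unfolding Defs.subfield_def by auto
qed

lemma combine_RK:
  "length Ks = length Us \<Longrightarrow> ring.combine (RK::'K::field ring) Ks Us = (\<Sum>i<length Us. Ks!i * Us!i)"
proof (induction Us arbitrary: Ks)
  case Nil
  then show ?case by (simp add: ring.combine.simps[OF ring_RK])
next
  case (Cons u Us)
  then obtain c Cs where "Ks = c # Cs" by (metis length_Suc_conv)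
  with Cons show ?case
    by (simp add: ring.combine.simps[OF ring_RK] sum.lessThan_Suc_shift del: sum.lessThan_Suc)
qed

lemma trivial_combine_imp_independent_RK:
  assumes k: "Defs.subfield k"
    and trivial: "\<And>cs. length cs = length Us \<Longrightarrow> set cs \<subseteq> k \<Longrightarrow>
                    (\<Sum>i<length Us. cs!i * Us!i) = 0 \<Longrightarrow> set cs \<subseteq> {0}"
  shows "ring.independent (RK::'K::field ring) k Us"
proof (rule ring.trivial_combine_imp_independent[OF ring_RK subfield_RK[OF k]])
  fix Ks assume Ks: "set Ks \<subseteq> k" "ring.combine RK Ks Us = \<zero>\<^bsub>RK\<^esub>"
  obtain Ks' where Ks': "set (take (length Us) Ks) \<subseteq> set Ks'"
     "set Ks' \<subseteq> set (take (length Us) Ks) \<union> {\<zero>\<^bsub>RK\<^esub>}"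
     "length Ks' = length Us" "ring.combine RK Ks' Us = \<zero>\<^bsub>RK\<^esub>"
    using ring.combine_normalize[OF ring_RK _ _ Ks(2)] by auto
  have "set (take (length Us) Ks) \<subseteq> k" using Ks(1) by (meson order_trans set_take_subset)
  with Ks'(2) k have "set Ks' \<subseteq> k" unfolding Defs.subfield_def by auto
  then have "set Ks' \<subseteq> {0}" using trivial[OF Ks'(3)] Ks'(4) combine_RK[OF Ks'(3)] by simp
  then show "set (take (length Us) Ks) \<subseteq> {\<zero>\<^bsub>RK\<^esub>}" using Ks'(1) by simp
qed simp

lemma ext_degree_independent_spans:
  assumes k: "Defs.subfield k" and deg: "ext_degree k n" and len: "length es = n"
    and indep: "\<And>cs. length cs = n \<Longrightarrow> set cs \<subseteq> k \<Longrightarrow> (\<Sum>i<n. cs!i * es!i) = 0 \<Longrightarrow> set cs \<subseteq> {0}"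
  shows "\<exists>cs. length cs = n \<and> set cs \<subseteq> k \<and> (x::'K::field) = (\<Sum>i<n. cs!i * es!i)"
proof -
  note R = ring_RK[where 'K='K] and K = subfield_RK[OF k]
  obtain bs :: "'K list" where bs: "length bs = n"
    "\<And>x. \<exists>!cs. length cs = n \<and> set cs \<subseteq> k \<and> x = (\<Sum>i<n. cs ! i * bs ! i)"
    using deg unfolding ext_degree_def by blast
  have "ring.independent (RK::'K ring) k bs"
  proof (rule trivial_combine_imp_independent_RK[OF k])
    fix cs assume cs: "length cs = length bs" "set cs \<subseteq> k" "(\<Sum>i<length bs. cs!i * bs!i) = 0"
    have "0 \<in> k" using k unfolding Defs.subfield_def by simp
    then have "length (replicate n 0) = n \<and> set (replicate n 0) \<subseteq> k \<and>
        (0::'K) = (\<Sum>i<n. replicate n 0 ! i * bs ! i)"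
      by (simp add: set_replicate_conv_if)
    then have "cs = replicate n 0" using bs(2)[of 0] cs bs(1) by metis
    then show "set cs \<subseteq> {0}" by (simp add: set_replicate_conv_if)
  qed
  moreover have "ring.Span (RK::'K ring) k bs = UNIV"
  proof -
    have "y \<in> ring.Span (RK::'K ring) k bs" for y
    proof -
      obtain cs where "length cs = n" "set cs \<subseteq> k" "y = (\<Sum>i<n. cs ! i * bs ! i)"
        using bs(2)[of y] by blast
      then show ?thesis
        using ring.Span_mem_iff_length_version[OF R K, of bs y] combine_RK[of cs bs] bs(1) by auto
    qed
    then show ?thesis by auto
  qed
  ultimately have "ring.dimension (RK::'K ring) n k UNIV"
    using ring.dimensionI[OF R K] bs(1) by metis
  moreover have "ring.independent (RK::'K ring) k es"
    using trivial_combine_imp_independent_RK[OF k, of es] indep len by auto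
  ultimately have "ring.Span (RK::'K ring) k es = UNIV"
    using ring.independent_length_eq_dimension[OF R K] len by simp
  then obtain Ks where "set Ks \<subseteq> k" "length Ks = length es" "x = ring.combine RK Ks es"
    using ring.Span_mem_iff_length_version[OF R K, of es x] by auto
  then show ?thesis using combine_RK[of Ks es] len by auto
qed

section \<open>Valuations\<close>

locale valued_field =
  fixes v :: "'K::field \<Rightarrow> int"
  assumes valuation: "discrete_valuation v"
begin

lemma val_mult: "x \<noteq> 0 \<Longrightarrow> y \<noteq> 0 \<Longrightarrow> v (x * y) = v x + v y"
  using valuation unfolding discrete_valuation_def by blast

lemma val_add: "x \<noteq> 0 \<Longrightarrow> y \<noteq> 0 \<Longrightarrow> x + y \<noteq> 0 \<Longrightarrow> min (v x) (v y) \<le> v (x + y)"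
  using valuation unfolding discrete_valuation_def by blast

lemma val_surj: "\<exists>x. x \<noteq> 0 \<and> v x = z"
  using valuation unfolding discrete_valuation_def by blast

lemma val_one [simp]: "v 1 = 0"
  using val_mult[of 1 1] by simp

lemma val_uminus: "x \<noteq> 0 \<Longrightarrow> v (- x) = v x"
proof -
  have "v (-1) = 0" using val_mult[of "-1" "-1"] by simp
  then show "x \<noteq> 0 \<Longrightarrow> v (- x) = v x" using val_mult[of "-1" x] by simp
qed

lemma val_inverse: "x \<noteq> 0 \<Longrightarrow> v (inverse x) = - v x"
  using val_mult[of x "inverse x"] by simp

lemma val_power: "x \<noteq> 0 \<Longrightarrow> v (x ^ i) = int i * v x"
  by (induction i) (simp_all add: val_mult algebra_simps)

lemma val_add_of_less:
  assumes x: "x \<noteq> 0" and y: "y \<noteq> 0" and less: "v x < v y"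
  shows "x + y \<noteq> 0" "v (x + y) = v x"
proof -
  show nz: "x + y \<noteq> 0"
  proof
    assume "x + y = 0"
    then have "x = - y" by (simp add: eq_neg_iff_add_eq_0)
    then show False using val_uminus[OF y] less by simp
  qed
  have "min (v (x + y)) (v (- y)) \<le> v x"
    using val_add[OF nz, of "- y"] x y by simp
  then show "v (x + y) = v x"
    using val_add[OF x y nz] val_uminus[OF y] less by linarith
qed

lemma val_sum_distinct:
  assumes "finite I" "I \<noteq> {}" "\<forall>i\<in>I. f i \<noteq> 0" "inj_on (\<lambda>i. v (f i)) I"
  shows "sum f I \<noteq> 0 \<and> v (sum f I) = (MIN i\<in>I. v (f i))"
  using assms
proof (induction I rule: finite_ne_induct)
  case (singleton i)
  then show ?case by simp
next
  case (insert j F)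
  let ?S = "sum f F"
  have S: "?S \<noteq> 0" "v ?S = (MIN i\<in>F. v (f i))" using insert by auto
  have "(MIN i\<in>F. v (f i)) \<in> (\<lambda>i. v (f i)) ` F"
    using insert.hyps(1,2) by (intro Min_in) simp_all
  then obtain i0 where i0: "i0 \<in> F" "v ?S = v (f i0)"
    using S(2) by auto
  have "v (f j) \<noteq> v (f i0)"
    using inj_on_eq_iff[OF insert.prems(2)] i0(1) insert.hyps(3) by fastforce
  then have distinct: "v (f j) \<noteq> v ?S" using i0(2) by simp
  have fj: "f j \<noteq> 0" using insert.prems by simp
  have "f j + ?S \<noteq> 0 \<and> v (f j + ?S) = min (v (f j)) (v ?S)"
  proof (cases "v (f j) < v ?S")
    case True
    then show ?thesis using val_add_of_less[OF fj S(1)] by simp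
  next
    case False
    then have "v ?S < v (f j)" using distinct by simp
    then show ?thesis using val_add_of_less[OF S(1) fj] by (simp add: add.commute)
  qed
  moreover have "sum f (insert j F) = f j + ?S" using insert.hyps by simp
  moreover have "(MIN i\<in>insert j F. v (f i)) = min (v (f j)) (MIN i\<in>F. v (f i))"
    using insert.hyps by simp
  ultimately show ?case using S(2) by simp
qed

lemma mpow_mult:
  assumes x: "x \<in> mpow v a" and t: "t \<noteq> 0" and le: "a' \<le> v t + a"
  shows "t * x \<in> mpow v a'"
proof (cases "x = 0")
  case False
  then show ?thesis using assms val_mult[OF t False] unfolding mpow_def by auto
qed (simp add: mpow_def)

end

locale valued_subfield = valued_field v for v :: "'K::field \<Rightarrow> int" +
  fixes k :: "'K set"
  assumes subfield: "Defs.subfield k"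
begin

lemma subfield_zero: "0 \<in> k"
  and subfield_add: "a \<in> k \<Longrightarrow> b \<in> k \<Longrightarrow> a + b \<in> k"
  and subfield_mult: "a \<in> k \<Longrightarrow> b \<in> k \<Longrightarrow> a * b \<in> k"
  and subfield_uminus: "a \<in> k \<Longrightarrow> - a \<in> k"
  and subfield_inverse: "a \<in> k \<Longrightarrow> inverse a \<in> k"
  using subfield unfolding Defs.subfield_def by auto

lemma subfield_diff: "a \<in> k \<Longrightarrow> b \<in> k \<Longrightarrow> a - b \<in> k"
  using subfield_add[of a "- b"] subfield_uminus[of b] by simp

lemma ring_of_integers_zero: "0 \<in> ring_of_integers v k"
  using subfield unfolding ring_of_integers_def Defs.subfield_def by auto

lemma ring_of_integers_one: "1 \<in> ring_of_integers v k"
  using subfield unfolding ring_of_integers_def Defs.subfield_def by auto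

lemma ring_of_integers_add:
  assumes a: "a \<in> ring_of_integers v k" and b: "b \<in> ring_of_integers v k"
  shows "a + b \<in> ring_of_integers v k"
proof -
  have "a + b \<in> k" using a b subfield unfolding ring_of_integers_def Defs.subfield_def by blast
  moreover have "0 \<le> v (a + b)" if "a \<noteq> 0" "b \<noteq> 0" "a + b \<noteq> 0"
  proof -
    have "0 \<le> min (v a) (v b)" using a b that unfolding ring_of_integers_def by simp
    then show ?thesis using val_add[OF that] by linarith
  qed
  ultimately show ?thesis using a b unfolding ring_of_integers_def by fastforce
qed

lemma ring_of_integers_mult:
  assumes a: "a \<in> ring_of_integers v k" and b: "b \<in> ring_of_integers v k"
  shows "a * b \<in> ring_of_integers v k"
proof -
  have "a * b \<in> k" using a b subfield unfolding ring_of_integers_def Defs.subfield_def by blast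
  moreover have "0 \<le> v (a * b)" if "a \<noteq> 0" "b \<noteq> 0"
    using val_mult[OF that] a b that unfolding ring_of_integers_def by simp
  ultimately show ?thesis unfolding ring_of_integers_def by auto
qed

lemma ring_of_integers_sum:
  "finite G \<Longrightarrow> (\<And>g. g \<in> G \<Longrightarrow> h g \<in> ring_of_integers v k) \<Longrightarrow> sum h G \<in> ring_of_integers v k"
  by (induction G rule: finite_induct) (simp_all add: ring_of_integers_zero ring_of_integers_add)

end

section \<open>The free space and the submodules A \<otimes> B\<close>

lemma lin_comb_zero: "(\<lambda>q. 0) \<in> lin_comb S C"
  unfolding lin_comb_def by (rule CollectI, intro exI[of _ "{}"]) auto

lemma lin_comb_single: "g \<in> S \<Longrightarrow> c \<in> C \<Longrightarrow> (\<lambda>q. c * g q) \<in> lin_comb S C"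
  unfolding lin_comb_def by (rule CollectI, intro exI[of _ "{g}"] exI[of _ "\<lambda>_. c"]) auto

lemma lin_comb_add:
  assumes C0: "0 \<in> C" and C_add: "\<And>a b. a \<in> C \<Longrightarrow> b \<in> C \<Longrightarrow> a + b \<in> C"
    and F: "F \<in> lin_comb S C" and H: "H \<in> lin_comb S C"
  shows "(\<lambda>q. F q + H q) \<in> lin_comb S C"
proof -
  obtain G1 c1 where G1: "F = (\<lambda>q. \<Sum>g\<in>G1. c1 g * g q)" "finite G1" "G1 \<subseteq> S" "\<forall>g\<in>G1. c1 g \<in> C"
    using F unfolding lin_comb_def by blast
  obtain G2 c2 where G2: "H = (\<lambda>q. \<Sum>g\<in>G2. c2 g * g q)" "finite G2" "G2 \<subseteq> S" "\<forall>g\<in>G2. c2 g \<in> C"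
    using H unfolding lin_comb_def by blast
  define c where "c g = (if g \<in> G1 then c1 g else 0) + (if g \<in> G2 then c2 g else 0)" for g
  have fin: "finite (G1 \<union> G2)" using G1 G2 by simp
  have "F q + H q = (\<Sum>g\<in>G1 \<union> G2. c g * g q)" for q
  proof -
    have "(\<Sum>g\<in>G1 \<union> G2. c g * g q) = (\<Sum>g\<in>G1 \<union> G2. if g \<in> G1 then c1 g * g q else 0)
          + (\<Sum>g\<in>G1 \<union> G2. if g \<in> G2 then c2 g * g q else 0)"
      unfolding sum.distrib[symmetric] by (rule sum.cong) (auto simp: c_def distrib_right)
    also have "\<dots> = F q + H q"
      using G1(1) G2(1) by (simp add: sum.inter_restrict[OF fin, symmetric] Int_absorb1)
    finally show ?thesis by simp
  qed
  moreover have "\<forall>g\<in>G1 \<union> G2. c g \<in> C" unfolding c_def using G1(4) G2(4) C0 C_add by auto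
  ultimately show ?thesis unfolding lin_comb_def using fin G1(3) G2(3) by blast
qed

lemma lin_comb_subset:
  assumes zero: "(\<lambda>q. 0) \<in> T" and add: "\<And>F H. F \<in> T \<Longrightarrow> H \<in> T \<Longrightarrow> (\<lambda>q. F q + H q) \<in> T"
    and gen: "\<And>g c. g \<in> S \<Longrightarrow> c \<in> C \<Longrightarrow> (\<lambda>q. c * g q) \<in> T"
  shows "lin_comb S C \<subseteq> T"
proof
  fix F assume "F \<in> lin_comb S C"
  then obtain G c where F: "F = (\<lambda>q. \<Sum>g\<in>G. c g * g q)" "finite G" "G \<subseteq> S" "\<forall>g\<in>G. c g \<in> C"
    unfolding lin_comb_def by blast
  have "(\<lambda>q. \<Sum>g\<in>H. c g * g q) \<in> T" if "finite H" "H \<subseteq> G" for H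
    using that
  proof (induction H rule: finite_induct)
    case empty
    then show ?case using zero by simp
  next
    case (insert g H)
    then have "(\<lambda>q. c g * g q + (\<Sum>g\<in>H. c g * g q)) \<in> T"
      using add gen F(3,4) by blast
    then show ?case using insert.hyps by simp
  qed
  then show "F \<in> T" using F by blast
qed

definition k_bilinear :: "'K set \<Rightarrow> ('K \<times> 'K \<Rightarrow> 'K::field) \<Rightarrow> bool" where
  "k_bilinear k B \<longleftrightarrow>
     (\<forall>x x' y. B (x + x', y) = B (x, y) + B (x', y)) \<and>
     (\<forall>x y y'. B (x, y + y') = B (x, y) + B (x, y')) \<and>
     (\<forall>c\<in>k. \<forall>x y. B (c * x, y) = c * B (x, y)) \<and>
     (\<forall>c\<in>k. \<forall>x y. B (x, c * y) = c * B (x, y))"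

definition free_eval :: "('a \<Rightarrow> 'K) \<Rightarrow> ('a \<Rightarrow> 'K::field) \<Rightarrow> 'K" where
  "free_eval B F = (\<Sum>q | F q \<noteq> 0. F q * B q)"

lemma free_eval_eq_sum:
  assumes "finite S" "{q. F q \<noteq> 0} \<subseteq> S"
  shows "free_eval B F = (\<Sum>q\<in>S. F q * B q)"
  unfolding free_eval_def by (rule sum.mono_neutral_left) (use assms in auto)

lemma support_sum_subset:
  fixes c :: "('a \<Rightarrow> 'K::field) \<Rightarrow> 'K"
  shows "{q. (\<Sum>g\<in>G. c g * g q) \<noteq> 0} \<subseteq> (\<Union>g\<in>G. {q. g q \<noteq> 0})"
proof
  fix q assume "q \<in> {q. (\<Sum>g\<in>G. c g * g q) \<noteq> 0}"
  then obtain g where "g \<in> G" "c g * g q \<noteq> 0" using sum.not_neutral_contains_not_neutral by force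
  then show "q \<in> (\<Union>g\<in>G. {q. g q \<noteq> 0})" by auto
qed

lemma finite_support_sum:
  fixes c :: "('a \<Rightarrow> 'K::field) \<Rightarrow> 'K"
  assumes "finite G" "\<And>g. g \<in> G \<Longrightarrow> finite {q. g q \<noteq> 0}"
  shows "finite {q. (\<Sum>g\<in>G. c g * g q) \<noteq> 0}"
  using assms by (blast intro: finite_subset[OF support_sum_subset])

lemma free_eval_sum:
  assumes fin: "finite G" and supp: "\<And>g. g \<in> G \<Longrightarrow> finite {q. g q \<noteq> 0}"
  shows "free_eval B (\<lambda>q. \<Sum>g\<in>G. c g * g q) = (\<Sum>g\<in>G. c g * free_eval B g)"
proof -
  let ?S = "\<Union>g\<in>G. {q. g q \<noteq> 0}"
  have finS: "finite ?S" using fin supp by blast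
  have "free_eval B (\<lambda>q. \<Sum>g\<in>G. c g * g q) = (\<Sum>q\<in>?S. \<Sum>g\<in>G. c g * (g q * B q))"
    unfolding free_eval_eq_sum[OF finS support_sum_subset]
    by (simp add: sum_distrib_right mult.assoc)
  also have "\<dots> = (\<Sum>g\<in>G. c g * (\<Sum>q\<in>?S. g q * B q))"
    by (subst sum.swap) (simp add: sum_distrib_left)
  also have "\<dots> = (\<Sum>g\<in>G. c g * free_eval B g)"
  proof (rule sum.cong[OF refl])
    fix g assume "g \<in> G"
    then have "{q. g q \<noteq> 0} \<subseteq> ?S" by blast
    then have "free_eval B g = (\<Sum>q\<in>?S. g q * B q)" by (rule free_eval_eq_sum[OF finS])
    then show "c g * (\<Sum>q\<in>?S. g q * B q) = c g * free_eval B g" by simp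
  qed
  finally show ?thesis .
qed

lemma free_eval_add:
  assumes "finite {q. F q \<noteq> 0}" "finite {q. H q \<noteq> 0}"
  shows "free_eval B (\<lambda>q. F q + H q) = free_eval B F + free_eval B H"
proof -
  let ?S = "{q. F q \<noteq> 0} \<union> {q. H q \<noteq> 0}"
  have fin: "finite ?S" using assms by simp
  have "free_eval B (\<lambda>q. F q + H q) = (\<Sum>q\<in>?S. F q * B q) + (\<Sum>q\<in>?S. H q * B q)"
    by (subst free_eval_eq_sum[OF fin]) (auto simp: distrib_right sum.distrib)
  also have "\<dots> = free_eval B F + free_eval B H"
    using free_eval_eq_sum[OF fin, of F] free_eval_eq_sum[OF fin, of H] by auto
  finally show ?thesis .
qed

lemma finite_support_delta3:
  "finite {q. a1 * delta p1 q + a2 * delta p2 q + a3 * delta p3 q \<noteq> (0::'K::field)}"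
  by (rule finite_subset[of _ "{p1, p2, p3}"]) (auto simp: delta_def)

lemma free_eval_delta3:
  fixes B :: "'K \<times> 'K \<Rightarrow> 'K::field"
  shows "free_eval B (\<lambda>q. a1 * delta p1 q + a2 * delta p2 q + a3 * delta p3 q)
       = a1 * B p1 + a2 * B p2 + a3 * B p3"
proof -
  let ?S = "{p1, p2, p3}"
  have delta_sum: "(\<Sum>q\<in>?S. delta p q * B q) = B p" if "p \<in> ?S" for p
  proof -
    have "\<And>q. delta p q * B q = (if q = p then B q else 0)" by (simp add: delta_def)
    then show ?thesis using that by (simp add: sum.delta')
  qed
  have "free_eval B (\<lambda>q. a1 * delta p1 q + a2 * delta p2 q + a3 * delta p3 q)
      = (\<Sum>q\<in>?S. (a1 * delta p1 q + a2 * delta p2 q + a3 * delta p3 q) * B q)"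
    by (rule free_eval_eq_sum) (auto simp: delta_def)
  also have "\<dots> = a1 * (\<Sum>q\<in>?S. delta p1 q * B q) + a2 * (\<Sum>q\<in>?S. delta p2 q * B q)
      + a3 * (\<Sum>q\<in>?S. delta p3 q * B q)"
    by (simp add: distrib_right sum.distrib sum_distrib_left mult.assoc)
  also have "\<dots> = a1 * B p1 + a2 * B p2 + a3 * B p3"
    by (simp add: delta_sum)
  finally show ?thesis .
qed

lemma finite_support_delta: "finite {q. delta p q \<noteq> 0}"
  unfolding delta_def by simp

lemma free_eval_delta: "free_eval B (delta p) = B p"
  using free_eval_delta3[of B 1 p 0 p 0 p] by simp

lemma free_eval_bilin_rels:
  assumes B: "k_bilinear k B" and g: "g \<in> bilin_rels k"
  shows "finite {q. g q \<noteq> 0} \<and> free_eval B g = 0"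
  using g unfolding bilin_rels_def
proof (elim UnE CollectE exE conjE)
  fix x x' y assume "g = (\<lambda>q. delta (x + x', y) q - delta (x, y) q - delta (x', y) q)"
  then have g_eq: "g = (\<lambda>q. 1 * delta (x + x', y) q + (-1) * delta (x, y) q + (-1) * delta (x', y) q)"
    by auto
  show ?thesis
    unfolding g_eq free_eval_delta3
    by (rule conjI[OF finite_support_delta3]) (use B in \<open>simp add: k_bilinear_def\<close>)
next
  fix x y y' assume "g = (\<lambda>q. delta (x, y + y') q - delta (x, y) q - delta (x, y') q)"
  then have g_eq: "g = (\<lambda>q. 1 * delta (x, y + y') q + (-1) * delta (x, y) q + (-1) * delta (x, y') q)"
    by auto
  show ?thesis
    unfolding g_eq free_eval_delta3
    by (rule conjI[OF finite_support_delta3]) (use B in \<open>simp add: k_bilinear_def\<close>)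
next
  fix c x y assume "g = (\<lambda>q. delta (c * x, y) q - c * delta (x, y) q)" "c \<in> k"
  then have g_eq: "g = (\<lambda>q. 1 * delta (c * x, y) q + (- c) * delta (x, y) q + 0 * delta (x, y) q)"
    by auto
  show ?thesis
    unfolding g_eq free_eval_delta3
    by (rule conjI[OF finite_support_delta3]) (use B \<open>c \<in> k\<close> in \<open>simp add: k_bilinear_def\<close>)
next
  fix c x y assume "g = (\<lambda>q. delta (x, c * y) q - c * delta (x, y) q)" "c \<in> k"
  then have g_eq: "g = (\<lambda>q. 1 * delta (x, c * y) q + (- c) * delta (x, y) q + 0 * delta (x, y) q)"
    by auto
  show ?thesis
    unfolding g_eq free_eval_delta3
    by (rule conjI[OF finite_support_delta3]) (use B \<open>c \<in> k\<close> in \<open>simp add: k_bilinear_def\<close>)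
qed

context valued_subfield
begin

lemma tensor_sub_intro:
  "f \<in> lin_comb {delta (x, y) | x y. x \<in> A \<and> y \<in> B} (ring_of_integers v k) \<Longrightarrow>
   r \<in> lin_comb (bilin_rels k) k \<Longrightarrow> (\<lambda>q. f q + r q) \<in> tensor_sub v k A B"
  unfolding tensor_sub_def by blast

lemma tensor_sub_add:
  assumes "F \<in> tensor_sub v k A B" "H \<in> tensor_sub v k A B"
  shows "(\<lambda>q. F q + H q) \<in> tensor_sub v k A B"
proof -
  let ?gens = "{delta (x, y) | x y. x \<in> A \<and> y \<in> B}"
  obtain f r where F: "F = (\<lambda>q. f q + r q)" "f \<in> lin_comb ?gens (ring_of_integers v k)"
      "r \<in> lin_comb (bilin_rels k) k"
    using assms(1) unfolding tensor_sub_def by blast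
  obtain f' r' where H: "H = (\<lambda>q. f' q + r' q)" "f' \<in> lin_comb ?gens (ring_of_integers v k)"
      "r' \<in> lin_comb (bilin_rels k) k"
    using assms(2) unfolding tensor_sub_def by blast
  have "(\<lambda>q. f q + f' q) \<in> lin_comb ?gens (ring_of_integers v k)"
    by (rule lin_comb_add[OF ring_of_integers_zero ring_of_integers_add F(2) H(2)])
  moreover have "(\<lambda>q. r q + r' q) \<in> lin_comb (bilin_rels k) k"
    by (rule lin_comb_add[OF subfield_zero subfield_add F(3) H(3)])
  ultimately have "(\<lambda>q. (f q + f' q) + (r q + r' q)) \<in> tensor_sub v k A B"
    by (rule tensor_sub_intro)
  then show ?thesis using F(1) H(1) by (simp add: algebra_simps)
qed

lemma tensor_sub_generator:
  assumes "x \<in> A" "y \<in> B" "c \<in> ring_of_integers v k"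
  shows "(\<lambda>q. c * delta (x, y) q) \<in> tensor_sub v k A B"
proof -
  have "(\<lambda>q. c * delta (x, y) q) \<in> lin_comb {delta (x, y) | x y. x \<in> A \<and> y \<in> B} (ring_of_integers v k)"
    using assms by (intro lin_comb_single) auto
  from tensor_sub_intro[OF this lin_comb_zero] show ?thesis by simp
qed

lemma bilin_rels_in_tensor_sub:
  "r \<in> lin_comb (bilin_rels k) k \<Longrightarrow> r \<in> tensor_sub v k A B"
  using tensor_sub_intro[OF lin_comb_zero] by simp

lemma tensor_sub_subset:
  assumes gen: "\<And>x y c. x \<in> A' \<Longrightarrow> y \<in> B' \<Longrightarrow> c \<in> ring_of_integers v k \<Longrightarrow>
                  (\<lambda>q. c * delta (x, y) q) \<in> tensor_sub v k A B"
  shows "tensor_sub v k A' B' \<subseteq> tensor_sub v k A B"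
proof
  fix F assume "F \<in> tensor_sub v k A' B'"
  then obtain f r where F: "F = (\<lambda>q. f q + r q)"
      "f \<in> lin_comb {delta (x, y) | x y. x \<in> A' \<and> y \<in> B'} (ring_of_integers v k)"
      "r \<in> lin_comb (bilin_rels k) k"
    unfolding tensor_sub_def by blast
  have "lin_comb {delta (x, y) | x y. x \<in> A' \<and> y \<in> B'} (ring_of_integers v k) \<subseteq> tensor_sub v k A B"
  proof (rule lin_comb_subset)
    show "(\<lambda>q. 0) \<in> tensor_sub v k A B" by (rule bilin_rels_in_tensor_sub[OF lin_comb_zero])
  next
    fix g c assume "g \<in> {delta (x, y) | x y. x \<in> A' \<and> y \<in> B'}" "c \<in> ring_of_integers v k"
    then show "(\<lambda>q. c * g q) \<in> tensor_sub v k A B" using gen by blast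
  qed (rule tensor_sub_add)
  then show "F \<in> tensor_sub v k A B"
    using F tensor_sub_add bilin_rels_in_tensor_sub by blast
qed

lemma free_eval_tensor_sub:
  assumes B: "k_bilinear k B" and integral: "\<And>x y. x \<in> A \<Longrightarrow> y \<in> B0 \<Longrightarrow> B (x, y) \<in> ring_of_integers v k"
    and F: "F \<in> tensor_sub v k A B0"
  shows "free_eval B F \<in> ring_of_integers v k"
proof -
  obtain f r where F: "F = (\<lambda>q. f q + r q)"
      "f \<in> lin_comb {delta (x, y) | x y. x \<in> A \<and> y \<in> B0} (ring_of_integers v k)"
      "r \<in> lin_comb (bilin_rels k) k"
    using assms unfolding tensor_sub_def by blast
  obtain G c where G: "f = (\<lambda>q. \<Sum>g\<in>G. c g * g q)" "finite G"
      "G \<subseteq> {delta (x, y) | x y. x \<in> A \<and> y \<in> B0}" "\<forall>g\<in>G. c g \<in> ring_of_integers v k"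
    using F(2) unfolding lin_comb_def by blast
  obtain G' c' where G': "r = (\<lambda>q. \<Sum>g\<in>G'. c' g * g q)" "finite G'" "G' \<subseteq> bilin_rels k"
    using F(3) unfolding lin_comb_def by blast
  have G_supp: "finite {q. g q \<noteq> 0}" and G_eval: "free_eval B g \<in> ring_of_integers v k"
    if g: "g \<in> G" for g
  proof -
    obtain x y where "g = delta (x, y)" "x \<in> A" "y \<in> B0" using G(3) g by blast
    then show "finite {q. g q \<noteq> 0}" "free_eval B g \<in> ring_of_integers v k"
      using finite_support_delta[of "(x, y)"] free_eval_delta[of B "(x, y)"] integral by simp_all
  qed
  have G'_eval: "finite {q. g q \<noteq> 0} \<and> free_eval B g = 0" if "g \<in> G'" for g
    using free_eval_bilin_rels[OF B] G'(3) that by blast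
  have "free_eval B F = free_eval B f + free_eval B r"
    unfolding F(1) G(1) G'(1)
    by (intro free_eval_add finite_support_sum) (use G(2) G'(2) G_supp G'_eval in auto)
  also have "\<dots> = (\<Sum>g\<in>G. c g * free_eval B g)"
    unfolding G(1) G'(1) using G(2) G'(2) G_supp G'_eval by (simp add: free_eval_sum)
  also have "\<dots> \<in> ring_of_integers v k"
    using G(2,4) G_eval by (intro ring_of_integers_sum ring_of_integers_mult) auto
  finally show ?thesis .
qed

text \<open>Moving a scalar t across the tensor sign: x \<otimes> y = t x \<otimes> t^-1 y.\<close>
lemma tensor_sub_rescale:
  assumes x: "x \<in> mpow v a'" and y: "y \<in> mpow v b'" and c: "c \<in> ring_of_integers v k"
    and t: "t \<in> k" "t \<noteq> 0" and a: "a \<le> a' + v t" and b: "b \<le> b' - v t"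
  shows "(\<lambda>q. c * delta (x, y) q) \<in> tensor_sub v k (mpow v a) (mpow v b)"
proof -
  let ?x = "t * x" and ?y = "inverse t * y"
  have ck: "c \<in> k" using c unfolding ring_of_integers_def by simp
  have it: "inverse t \<in> k" "inverse t \<noteq> 0" using subfield_inverse[OF t(1)] t(2) by auto
  have "?x \<in> mpow v a" using mpow_mult[OF x t(2)] a by simp
  moreover have "?y \<in> mpow v b" using mpow_mult[OF y it(2)] val_inverse[OF t(2)] b by simp
  ultimately have main: "(\<lambda>q. c * delta (?x, ?y) q) \<in> tensor_sub v k (mpow v a) (mpow v b)"
    using c by (rule tensor_sub_generator)
  let ?rel1 = "\<lambda>q. delta (?x, ?y) q - t * delta (x, ?y) q"
  let ?rel2 = "\<lambda>q. delta (x, ?y) q - inverse t * delta (x, y) q"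
  have rel1: "?rel1 \<in> bilin_rels k" and rel2: "?rel2 \<in> bilin_rels k"
    unfolding bilin_rels_def using t(1) it(1) by blast+
  have "(\<lambda>q. (- c) * ?rel1 q) \<in> lin_comb (bilin_rels k) k"
    using ck by (intro lin_comb_single[OF rel1] subfield_uminus)
  moreover have "(\<lambda>q. (- (c * t)) * ?rel2 q) \<in> lin_comb (bilin_rels k) k"
    using ck t(1) by (intro lin_comb_single[OF rel2] subfield_uminus subfield_mult)
  ultimately have "(\<lambda>q. (- c) * ?rel1 q + (- (c * t)) * ?rel2 q) \<in> tensor_sub v k (mpow v a) (mpow v b)"
    by (intro tensor_sub_add bilin_rels_in_tensor_sub)
  from tensor_sub_add[OF main this]
  show ?thesis using t(2) by (simp add: field_simps)
qed

end

section \<open>The orders on Z^2 and on X\<close>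

lemma le2_partial_order: "partial_order_on UNIV le2"
  unfolding partial_order_on_def preorder_on_def refl_on_def trans_def antisym_def le2_def
  by auto

lemma sim_equiv: "equiv UNIV (sim n)"
proof (rule equivI)
  show "sim n \<subseteq> UNIV \<times> UNIV" by simp
  show "refl_on UNIV (sim n)" unfolding refl_on_def sim_def by (auto intro: exI[of _ 0])
  show "sym (sim n)" unfolding sym_def sim_def
  proof clarsimp
    fix a b a' b' c assume "a - a' = int n * c" "b' - b = int n * c"
    then show "\<exists>c. a' - a = int n * c \<and> b - b' = int n * c" by (intro exI[of _ "- c"]) simp
  qed
  show "trans (sim n)" unfolding trans_def sim_def
  proof clarsimp
    fix a b a' b' a'' b'' c d assume "a - a' = int n * c" "b' - b = int n * c"
       "a' - a'' = int n * d" "b'' - b' = int n * d"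
    then show "\<exists>c. a - a'' = int n * c \<and> b'' - b = int n * c"
      by (intro exI[of _ "c + d"]) (simp add: algebra_simps)
  qed
qed

lemma sim_refl: "(p, p) \<in> sim n"
  unfolding sim_def by (auto intro: exI[of _ 0])

lemma leX_rep_iff:
  "leX_rep n p q \<longleftrightarrow> (\<exists>d. fst p \<le> fst q + int n * d \<and> snd p \<le> snd q - int n * d)"
proof
  assume "leX_rep n p q"
  then obtain q'' where q'': "(q'', q) \<in> sim n" "(p, q'') \<in> le2" unfolding leX_rep_def by blast
  then obtain c where "fst q'' - fst q = int n * c" "snd q - snd q'' = int n * c"
    unfolding sim_def by auto
  then show "\<exists>d. fst p \<le> fst q + int n * d \<and> snd p \<le> snd q - int n * d"
    using q''(2) unfolding le2_def by (intro exI[of _ c]) auto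
next
  assume "\<exists>d. fst p \<le> fst q + int n * d \<and> snd p \<le> snd q - int n * d"
  then obtain d where "fst p \<le> fst q + int n * d" "snd p \<le> snd q - int n * d" by blast
  then have "((fst q + int n * d, snd q - int n * d), q) \<in> sim n"
      "(p, (fst q + int n * d, snd q - int n * d)) \<in> le2"
    unfolding sim_def le2_def by auto
  then show "leX_rep n p q" unfolding leX_rep_def by blast
qed

lemma leX_rep_iff_decomp:
  assumes a': "a' = int n * s + i" and b': "b' = int n * t + j"
  shows "leX_rep n (a, b) (a', b') \<longleftrightarrow>
    (\<exists>m m'. a \<le> int n * m + i \<and> b \<le> int n * m' + j \<and> m + m' \<le> s + t)"
proof
  assume "leX_rep n (a, b) (a', b')"
  then obtain d where "a \<le> a' + int n * d" "b \<le> b' - int n * d"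
    unfolding leX_rep_iff by auto
  then show "\<exists>m m'. a \<le> int n * m + i \<and> b \<le> int n * m' + j \<and> m + m' \<le> s + t"
    using a' b' by (intro exI[of _ "s + d"] exI[of _ "t - d"]) (simp add: algebra_simps)
next
  assume "\<exists>m m'. a \<le> int n * m + i \<and> b \<le> int n * m' + j \<and> m + m' \<le> s + t"
  then obtain m m' where m: "a \<le> int n * m + i" "b \<le> int n * m' + j" "m' \<le> s + t - m"
    by auto
  have "int n * m' \<le> int n * (s + t - m)"
    using m(3) by (intro mult_left_mono) auto
  then have "a \<le> a' + int n * (m - s) \<and> b \<le> b' - int n * (m - s)"
    using m(1,2) a' b' by (simp add: algebra_simps)
  then show "leX_rep n (a, b) (a', b')" unfolding leX_rep_iff by auto
qed

lemma leX_rep_refl: "leX_rep n p p"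
  unfolding leX_rep_iff by (auto intro: exI[of _ 0])

lemma leX_rep_trans:
  assumes "leX_rep n p q" "leX_rep n q r"
  shows "leX_rep n p r"
proof -
  obtain d d' where "fst p \<le> fst q + int n * d" "snd p \<le> snd q - int n * d"
    "fst q \<le> fst r + int n * d'" "snd q \<le> snd r - int n * d'"
    using assms unfolding leX_rep_iff by blast
  then have "fst p \<le> fst r + int n * (d + d') \<and> snd p \<le> snd r - int n * (d + d')"
    by (simp add: algebra_simps)
  then show ?thesis unfolding leX_rep_iff by blast
qed

lemma sim_imp_leX_rep:
  assumes "(p, q) \<in> sim n"
  shows "leX_rep n p q" "leX_rep n q p"
proof -
  obtain c where "fst p - fst q = int n * c" "snd q - snd p = int n * c"
    using assms unfolding sim_def by auto
  then have "fst p \<le> fst q + int n * c \<and> snd p \<le> snd q - int n * c"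
    "fst q \<le> fst p + int n * (- c) \<and> snd q \<le> snd p - int n * (- c)"
    by simp_all
  then show "leX_rep n p q" "leX_rep n q p" unfolding leX_rep_iff by blast+
qed

lemma leX_rep_antisym:
  assumes "n > 0" "leX_rep n p q" "leX_rep n q p"
  shows "(p, q) \<in> sim n"
proof -
  obtain c d where c: "fst p \<le> fst q + int n * c" "snd p \<le> snd q - int n * c"
    and d: "fst q \<le> fst p + int n * d" "snd q \<le> snd p - int n * d"
    using assms(2,3) unfolding leX_rep_iff by blast
  have "int n * (c + d) = 0" using c d by (simp add: algebra_simps)
  then have "d = - c" using assms(1) by simp
  then have "fst p - fst q = int n * c \<and> snd q - snd p = int n * c"
    using c d by simp
  then show ?thesis unfolding sim_def by auto
qed

lemma leX_rep_respects_sim: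
  assumes "(p, p') \<in> sim n" "(q, q') \<in> sim n"
  shows "leX_rep n p q = leX_rep n p' q'"
  using sim_imp_leX_rep[OF assms(1)] sim_imp_leX_rep[OF assms(2)] leX_rep_trans by metis

lemma leX_class_iff: "(sim n `` {p}, sim n `` {q}) \<in> leX n \<longleftrightarrow> leX_rep n p q"
proof
  assume "(sim n `` {p}, sim n `` {q}) \<in> leX n"
  then obtain p' q' where "(p, p') \<in> sim n" "(q, q') \<in> sim n" "leX_rep n p' q'"
    unfolding leX_def by blast
  then show "leX_rep n p q" using leX_rep_respects_sim by blast
next
  assume "leX_rep n p q"
  moreover have "p \<in> sim n `` {p}" "q \<in> sim n `` {q}"
    by (simp_all add: sim_refl)
  ultimately show "(sim n `` {p}, sim n `` {q}) \<in> leX n"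
    unfolding leX_def by (auto intro: quotientI)
qed

lemma leX_partial_order:
  assumes "n > 0"
  shows "partial_order_on (UNIV // sim n) (leX n)"
  unfolding partial_order_on_def preorder_on_def refl_on_def trans_def antisym_def
proof (intro conjI ballI allI impI)
  show "leX n \<subseteq> UNIV // sim n \<times> UNIV // sim n" unfolding leX_def by auto
next
  fix P assume "P \<in> UNIV // sim n"
  then show "(P, P) \<in> leX n"
    by (auto elim!: quotientE simp: leX_class_iff leX_rep_refl)
next
  fix P Q R assume PQ: "(P, Q) \<in> leX n" and QR: "(Q, R) \<in> leX n"
  then obtain p q r where P: "P = sim n `` {p}" and Q: "Q = sim n `` {q}" and R: "R = sim n `` {r}"
    unfolding leX_def by (auto elim!: quotientE)
  show "(P, R) \<in> leX n"
    using PQ QR leX_rep_trans unfolding P Q R leX_class_iff by blast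
next
  fix P Q assume PQ: "(P, Q) \<in> leX n" and QP: "(Q, P) \<in> leX n"
  then obtain p q where P: "P = sim n `` {p}" and Q: "Q = sim n `` {q}"
    unfolding leX_def by (auto elim!: quotientE)
  then have "(p, q) \<in> sim n"
    using PQ QP leX_rep_antisym[OF assms] unfolding P Q leX_class_iff by blast
  then show "P = Q" unfolding P Q by (rule equiv_class_eq[OF sim_equiv])
qed

section \<open>Coordinates in the basis of powers of a uniformizer\<close>

lemma dvd_add_residue_unique:
  fixes x y :: int and i j n :: nat
  assumes "int n dvd x" "int n dvd y" "x + int i = y + int j" "i < n" "j < n"
  shows "i = j"
proof -
  have "(x + int i) mod int n = int i" using assms(1,4) by (auto elim!: dvdE)
  moreover have "(y + int j) mod int n = int j" using assms(2,5) by (auto elim!: dvdE)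
  ultimately show ?thesis using assms(3) by simp
qed

locale totally_ramified = valued_subfield v k for v :: "'K::field \<Rightarrow> int" and k +
  fixes n :: nat
  assumes degree: "ext_degree k n"
    and value_group: "{v x | x. x \<in> k \<and> x \<noteq> 0} = {int n * c | c. True}"
begin

lemma degree_pos: "n > 0"
proof (rule ccontr)
  assume "\<not> n > 0"
  moreover obtain bs :: "'K list" where "\<exists>cs. (1::'K) = (\<Sum>i<n. cs ! i * bs ! i)"
    using degree unfolding ext_degree_def by blast
  ultimately show False by simp
qed

lemma val_k_dvd:
  assumes "c \<in> k" "c \<noteq> 0"
  shows "int n dvd v c"
proof -
  have "v c \<in> {int n * c | c. True}" using assms value_group by blast
  then show ?thesis by auto
qed

lemma exists_k_val: "\<exists>u. u \<in> k \<and> u \<noteq> 0 \<and> v u = int n * m"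
proof -
  have "int n * m \<in> {v x | x. x \<in> k \<and> x \<noteq> 0}" using value_group by blast
  then show ?thesis by auto
qed

definition uniformizer :: 'K where
  "uniformizer = (SOME x. x \<noteq> 0 \<and> v x = 1)"

lemma uniformizer: "uniformizer \<noteq> 0" "v uniformizer = 1"
  using someI_ex[OF val_surj[of 1]] unfolding uniformizer_def by blast+

lemma val_monomial: "v (u * uniformizer ^ i) = v u + int i" if "u \<noteq> 0"
  using that uniformizer val_mult val_power by simp

lemma val_sum_uniformizer_powers:
  assumes c: "\<And>i. i < n \<Longrightarrow> c i \<in> k" and i: "i < n" "c i \<noteq> 0"
  shows "(\<Sum>l<n. c l * uniformizer ^ l) \<noteq> 0 \<and> v (\<Sum>l<n. c l * uniformizer ^ l) \<le> v (c i) + int i"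
proof -
  let ?I = "{l. l < n \<and> c l \<noteq> 0}"
  have sum_eq: "(\<Sum>l<n. c l * uniformizer ^ l) = (\<Sum>l\<in>?I. c l * uniformizer ^ l)"
    by (rule sum.mono_neutral_right) auto
  have "inj_on (\<lambda>l. v (c l * uniformizer ^ l)) ?I"
  proof (rule inj_onI)
    fix l l' assume "l \<in> ?I" "l' \<in> ?I" "v (c l * uniformizer ^ l) = v (c l' * uniformizer ^ l')"
    then show "l = l'"
      using dvd_add_residue_unique[of n "v (c l)" "v (c l')" l l'] c val_k_dvd by (simp add: val_monomial)
  qed
  then have "(\<Sum>l\<in>?I. c l * uniformizer ^ l) \<noteq> 0 \<and>
      v (\<Sum>l\<in>?I. c l * uniformizer ^ l) = (MIN l\<in>?I. v (c l * uniformizer ^ l))"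
    using i uniformizer(1) by (intro val_sum_distinct) auto
  moreover have "(MIN l\<in>?I. v (c l * uniformizer ^ l)) \<le> v (c i * uniformizer ^ i)"
    using i by (intro Min_le) auto
  ultimately show ?thesis using sum_eq val_monomial[OF i(2)] by simp
qed

lemma uniformizer_powers_independent:
  "(\<And>i. i < n \<Longrightarrow> c i \<in> k) \<Longrightarrow> (\<Sum>i<n. c i * uniformizer ^ i) = 0 \<Longrightarrow> i < n \<Longrightarrow> c i = 0"
  using val_sum_uniformizer_powers by blast

lemma uniformizer_powers_span: "\<exists>c. (\<forall>i<n. c i \<in> k) \<and> x = (\<Sum>i<n. c i * uniformizer ^ i)"
proof -
  define es where "es = map (\<lambda>i. uniformizer ^ i) [0..<n]"
  have sum_es: "(\<Sum>i<n. cs ! i * es ! i) = (\<Sum>i<n. cs ! i * uniformizer ^ i)" for cs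
    unfolding es_def by (intro sum.cong) auto
  have "\<exists>cs. length cs = n \<and> set cs \<subseteq> k \<and> x = (\<Sum>i<n. cs ! i * es ! i)"
  proof (rule ext_degree_independent_spans[OF subfield degree])
    show "length es = n" unfolding es_def by simp
    fix cs :: "'K list" assume cs: "length cs = n" "set cs \<subseteq> k" "(\<Sum>i<n. cs ! i * es ! i) = 0"
    then have "cs ! i = 0" if "i < n" for i
      using uniformizer_powers_independent[of "(!) cs"] that nth_mem sum_es by (metis subsetD)
    then show "set cs \<subseteq> {0}" using cs(1) by (auto simp: set_conv_nth)
  qed
  then show ?thesis using sum_es by (metis nth_mem subsetD)
qed

definition coords :: "'K \<Rightarrow> nat \<Rightarrow> 'K" where
  "coords x = (SOME c. (\<forall>i<n. c i \<in> k) \<and> x = (\<Sum>i<n. c i * uniformizer ^ i))"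

lemma coords_in_k: "i < n \<Longrightarrow> coords x i \<in> k"
  and coords_expansion: "x = (\<Sum>i<n. coords x i * uniformizer ^ i)"
  using someI_ex[OF uniformizer_powers_span[of x]] unfolding coords_def by auto

lemma coords_unique:
  assumes c: "\<And>i. i < n \<Longrightarrow> c i \<in> k" and x: "x = (\<Sum>i<n. c i * uniformizer ^ i)" and i: "i < n"
  shows "coords x i = c i"
proof -
  have "(\<Sum>i<n. (coords x i - c i) * uniformizer ^ i) = 0"
    using coords_expansion[of x] x by (simp add: left_diff_distrib sum_subtractf)
  then have "coords x i - c i = 0"
    using c coords_in_k i by (intro uniformizer_powers_independent[of "\<lambda>i. coords x i - c i"])
      (auto simp: subfield_diff)
  then show ?thesis by simp
qed

lemma coords_add:
  assumes "i < n"
  shows "coords (x + y) i = coords x i + coords y i"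
proof (rule coords_unique[OF _ _ assms])
  have "x + y = (\<Sum>i<n. coords x i * uniformizer ^ i) + (\<Sum>i<n. coords y i * uniformizer ^ i)"
    by (rule arg_cong2[OF coords_expansion coords_expansion])
  then show "x + y = (\<Sum>i<n. (coords x i + coords y i) * uniformizer ^ i)"
    by (simp add: distrib_right sum.distrib)
qed (use coords_in_k in \<open>simp add: subfield_add\<close>)

lemma coords_scale:
  assumes "i < n" "c \<in> k"
  shows "coords (c * x) i = c * coords x i"
proof (rule coords_unique[OF _ _ assms(1)])
  have "c * x = c * (\<Sum>i<n. coords x i * uniformizer ^ i)"
    using coords_expansion by (rule arg_cong)
  then show "c * x = (\<Sum>i<n. (c * coords x i) * uniformizer ^ i)"
    by (simp add: sum_distrib_left mult.assoc)
qed (use coords_in_k assms(2) in \<open>simp add: subfield_mult\<close>)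

lemma coords_monomial:
  assumes "i < n" "u \<in> k"
  shows "coords (u * uniformizer ^ i) i = u"
proof -
  have "(\<Sum>l<n. (if l = i then u else 0) * uniformizer ^ l) = (\<Sum>l<n. if l = i then u * uniformizer ^ l else 0)"
    by (rule sum.cong) auto
  then have "u * uniformizer ^ i = (\<Sum>l<n. (if l = i then u else 0) * uniformizer ^ l)"
    using assms(1) by simp
  then show ?thesis
    using coords_unique[of "\<lambda>l. if l = i then u else 0"] assms subfield_zero by simp
qed

lemma val_le_coords: "i < n \<Longrightarrow> coords x i \<noteq> 0 \<Longrightarrow> x \<noteq> 0 \<and> v x \<le> v (coords x i) + int i"
  using val_sum_uniformizer_powers[of "coords x", OF coords_in_k] coords_expansion[of x, symmetric]
  by simp

lemma k_bilinear_coords: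
  assumes "w \<in> k" "i < n" "j < n"
  shows "k_bilinear k (\<lambda>(x, y). w * coords x i * coords y j)"
  using assms unfolding k_bilinear_def by (simp add: coords_add coords_scale algebra_simps)


section \<open>Comparing tensor products of powers of the maximal ideal\<close>

lemma tensor_sub_mpow_subset:
  assumes "leX_rep n (a, b) (a', b')"
  shows "tensor_sub v k (mpow v a') (mpow v b') \<subseteq> tensor_sub v k (mpow v a) (mpow v b)"
proof -
  obtain d where d: "a \<le> a' + int n * d" "b \<le> b' - int n * d"
    using assms unfolding leX_rep_iff by auto
  obtain t where t: "t \<in> k" "t \<noteq> 0" "v t = int n * d"
    using exists_k_val by blast
  show ?thesis
    by (rule tensor_sub_subset, rule tensor_sub_rescale[OF _ _ _ t(1,2)]) (use d t(3) in auto)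
qed

lemma val_coords_mpow:
  assumes "x \<in> mpow v e" "i < n" "coords x i \<noteq> 0"
  shows "\<exists>m. v (coords x i) = int n * m \<and> e \<le> int n * m + int i"
proof -
  obtain m where m: "v (coords x i) = int n * m"
    using val_k_dvd[of "coords x i"] coords_in_k assms(2,3) by auto
  have "x \<noteq> 0 \<and> v x \<le> v (coords x i) + int i" using val_le_coords assms(2,3) by blast
  then show ?thesis using assms(1) m unfolding mpow_def by auto
qed

lemma coords_form_integral:
  assumes w: "w \<in> k" "w \<noteq> 0" and ij: "i < n" "j < n"
    and bound: "\<And>m m'. a \<le> int n * m + int i \<Longrightarrow> b \<le> int n * m' + int j \<Longrightarrow> 0 \<le> v w + int n * (m + m')"
    and xy: "x \<in> mpow v a" "y \<in> mpow v b"
  shows "w * coords x i * coords y j \<in> ring_of_integers v k"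
proof (cases "coords x i = 0 \<or> coords y j = 0")
  case True
  then show ?thesis using ring_of_integers_zero by auto
next
  case False
  then obtain m m' where m: "v (coords x i) = int n * m" "a \<le> int n * m + int i"
      and m': "v (coords y j) = int n * m'" "b \<le> int n * m' + int j"
    using val_coords_mpow xy ij by meson
  have "v (w * coords x i * coords y j) = v w + int n * (m + m')"
    using False w(2) m(1) m'(1) by (simp add: val_mult distrib_left)
  then have "0 \<le> v (w * coords x i * coords y j)"
    using bound[OF m(2) m'(2)] by simp
  moreover have "w * coords x i * coords y j \<in> k"
    using w(1) coords_in_k ij by (simp add: subfield_mult)
  ultimately show ?thesis unfolding ring_of_integers_def by simp
qed

text \<open>Let i, j be the residues of a', b' mod n. With v(w) as large as integrality on
  m^a \<times> m^b allows, the form w coords_i(x) coords_j(y) is not integral at some x \<otimes> y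
  with v(x) = a' and v(y) = b'.\<close>
lemma tensor_sub_mpow_not_subset:
  assumes "\<not> leX_rep n (a, b) (a', b')"
  shows "\<not> tensor_sub v k (mpow v a') (mpow v b') \<subseteq> tensor_sub v k (mpow v a) (mpow v b)"
proof
  assume incl: "tensor_sub v k (mpow v a') (mpow v b') \<subseteq> tensor_sub v k (mpow v a) (mpow v b)"
  define s t where "s = a' div int n" and "t = b' div int n"
  define i j where "i = nat (a' mod int n)" and "j = nat (b' mod int n)"
  have ij: "int i = a' mod int n" "int j = b' mod int n" "i < n" "j < n"
    using degree_pos unfolding i_def j_def by (simp_all add: nat_less_iff)
  have a': "a' = int n * s + int i" and b': "b' = int n * t + int j"
    unfolding s_def t_def ij by simp_all
  obtain u1 where u1: "u1 \<in> k" "u1 \<noteq> 0" "v u1 = int n * s"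
    using exists_k_val by blast
  obtain u2 where u2: "u2 \<in> k" "u2 \<noteq> 0" "v u2 = int n * t"
    using exists_k_val by blast
  obtain w where w: "w \<in> k" "w \<noteq> 0" "v w = - (int n * (s + t + 1))"
    using exists_k_val[of "- (s + t + 1)"] by (metis mult_minus_right)
  have bound: "0 \<le> v w + int n * (m + m')"
    if "a \<le> int n * m + int i" "b \<le> int n * m' + int j" for m m'
  proof -
    have "s + t < m + m'"
      using assms that unfolding leX_rep_iff_decomp[OF a' b'] by force
    then have "int n * (s + t + 1) \<le> int n * (m + m')"
      by (intro mult_left_mono) auto
    then show ?thesis using w(3) by linarith
  qed
  define B where "B = (\<lambda>(x, y). w * coords x i * coords y j)"
  have "delta (u1 * uniformizer ^ i, u2 * uniformizer ^ j) \<in> tensor_sub v k (mpow v a') (mpow v b')"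
    using tensor_sub_generator[OF _ _ ring_of_integers_one, of "u1 * uniformizer ^ i" _ "u2 * uniformizer ^ j"]
      u1 u2 a' b' by (simp add: mpow_def val_monomial)
  then have "free_eval B (delta (u1 * uniformizer ^ i, u2 * uniformizer ^ j)) \<in> ring_of_integers v k"
  proof (intro free_eval_tensor_sub[OF _ _ subsetD[OF incl]])
    show "k_bilinear k B" unfolding B_def using k_bilinear_coords w(1) ij(3,4) .
    fix x y assume "x \<in> mpow v a" "y \<in> mpow v b"
    then show "B (x, y) \<in> ring_of_integers v k"
      unfolding B_def using coords_form_integral[OF w(1,2) ij(3,4) bound] by simp
  qed
  moreover have "v (w * u1 * u2) = - int n" using w u1 u2 by (simp add: val_mult algebra_simps)
  ultimately show False
    using degree_pos w u1 u2 ij coords_monomial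
    by (simp add: B_def free_eval_delta ring_of_integers_def)
qed

lemma tensor_sub_mpow_subset_iff:
  "tensor_sub v k (mpow v a') (mpow v b') \<subseteq> tensor_sub v k (mpow v a) (mpow v b)
     \<longleftrightarrow> leX_rep n (a, b) (a', b')"
  using tensor_sub_mpow_subset tensor_sub_mpow_not_subset by blast

end

theorem lemma4p2p3:
  fixes v :: "'K::field \<Rightarrow> int" and k :: "'K set" and n :: nat
  assumes "Defs.subfield k"
    and "discrete_valuation v"
    and "vcomplete_on v (UNIV :: 'K set)"
    and "vcomplete_on v k"
    and "ext_degree k n"
    and "{v x | x. x \<in> k \<and> x \<noteq> 0} = {int n * c | c. True}"
  shows "partial_order_on UNIV le2 \<and> equiv UNIV (sim n)
    \<and> (\<forall>p p' q q'. (p, p') \<in> sim n \<longrightarrow> (q, q') \<in> sim n \<longrightarrow> leX_rep n p q = leX_rep n p' q')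
    \<and> partial_order_on (UNIV // sim n) (leX n)
    \<and> (\<forall>a b a' b'. tensor_sub v k (mpow v a') (mpow v b') \<subseteq> tensor_sub v k (mpow v a) (mpow v b)
          \<longleftrightarrow> (sim n `` {(a, b)}, sim n `` {(a', b')}) \<in> leX n)"
proof -
  interpret totally_ramified v k n
    using assms by unfold_locales auto
  show ?thesis
    using le2_partial_order sim_equiv leX_rep_respects_sim leX_partial_order[OF degree_pos]
      tensor_sub_mpow_subset_iff leX_class_iff by blast
qed

end
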